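(* Let $\mathcal{Q}$ be a parabolic subset of $\mathcal{R}$, $\mathrm{s}$ an involution of $\mathcal{R}$, and $C$ a $V$-fit Weyl chamber for $(\mathcal{Q},\mathrm{s})$, with $\Phi_C=\mathcal{B}(C)\cap\mathcal{Q}^n$. The following are equivalent: (1) $\mathcal{Q}\cup\mathrm{s}(\mathcal{Q})=\mathcal{R}$ (i.e. $(\mathcal{Q},\mathrm{s})$ is totally complex); (2) $\mathrm{s}(\mathcal{Q}^n)\subseteq\mathcal{R}^-(C)$; (3) $\mathrm{s}(\Phi_C)\subseteq\mathcal{R}^-(C)$.
   Context: $\mathcal{R}$ is a reduced root system in a Euclidean space $V$. Closed subset: $\alpha,\beta\in\mathcal{Q}$, $\alpha+\beta\in\mathcal{R}\Rightarrow\alpha+\beta\in\mathcal{Q}$; parabolic: closed with $\mathcal{Q}\cup(-\mathcal{Q})=\mathcal{R}$. $\mathcal{Q}^n=\{\alpha\in\mathcal{Q}\mid-\alpha\notin\mathcal{Q}\}$. For a Weyl chamber $C$: $\mathcal{R}^\pm(C)$ positive/negative roots, $\mathcal{B}(C)$ simple roots. $C$ is admissible for $\mathcal{Q}$ if $\mathcal{R}^+(C)\subseteq\mathcal{Q}$. An involution of $\mathcal{R}$ is a linear isometric involution $\mathrm{s}$ of $V$ with $\mathrm{s}(\mathcal{R})=\mathcal{R}$; a root $\alpha$ is real if $\mathrm{s}(\alpha)=\alpha$, imaginary if $\mathrm{s}(\alpha)=-\alpha$, complex otherwise. An admissible chamber $C$ is $V$-fit for $(\mathcal{Q},\mathrm{s})$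 if $\mathrm{s}(\alpha)\in\mathcal{R}^-(C)$ for every complex $\alpha\in\mathcal{B}(C)\setminus\Phi_C$. *)

theory Defs
  imports "HOL-Analysis.Analysis"
begin

definition reduced_root_system :: "'a::euclidean_space set \<Rightarrow> bool" where
  "reduced_root_system R \<longleftrightarrow>
     finite R \<and> 0 \<notin> R \<and> span R = UNIV \<and>
     (\<forall>\<alpha>\<in>R. \<forall>\<beta>\<in>R. 2 * (\<beta> \<bullet> \<alpha>) / (\<alpha> \<bullet> \<alpha>) \<in> \<int> \<and>
                 \<beta> - (2 * (\<beta> \<bullet> \<alpha>) / (\<alpha> \<bullet> \<alpha>)) *\<^sub>R \<alpha> \<in> R) \<and>
     (\<forall>\<alpha>\<in>R. \<forall>c::real. c *\<^sub>R \<alpha> \<in> R \<longrightarrow> c = 1 \<or> c = -1)"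

definition closed_subset :: "'a::euclidean_space set \<Rightarrow> 'a set \<Rightarrow> bool" where
  "closed_subset R Q \<longleftrightarrow> Q \<subseteq> R \<and>
     (\<forall>\<alpha>\<in>Q. \<forall>\<beta>\<in>Q. \<alpha> + \<beta> \<in> R \<longrightarrow> \<alpha> + \<beta> \<in> Q)"

definition parabolic_subset :: "'a::euclidean_space set \<Rightarrow> 'a set \<Rightarrow> bool" where
  "parabolic_subset R Q \<longleftrightarrow> closed_subset R Q \<and> Q \<union> uminus ` Q = R"

definition nilpart :: "'a::euclidean_space set \<Rightarrow> 'a set" where
  "nilpart Q = {\<alpha>\<in>Q. - \<alpha> \<notin> Q}"

definition regular_set :: "'a::euclidean_space set \<Rightarrow> 'a set" where
  "regular_set R = UNIV - (\<Union>\<alpha>\<in>R. {v. v \<bullet> \<alpha> = 0})"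

definition weyl_chamber :: "'a::euclidean_space set \<Rightarrow> 'a set \<Rightarrow> bool" where
  "weyl_chamber R C \<longleftrightarrow>
     (\<exists>x \<in> regular_set R. C = connected_component_set (regular_set R) x)"

definition pos_roots :: "'a::euclidean_space set \<Rightarrow> 'a set \<Rightarrow> 'a set" where
  "pos_roots R C = {\<alpha>\<in>R. \<forall>x\<in>C. x \<bullet> \<alpha> > 0}"

definition neg_roots :: "'a::euclidean_space set \<Rightarrow> 'a set \<Rightarrow> 'a set" where
  "neg_roots R C = {\<alpha>\<in>R. \<forall>x\<in>C. x \<bullet> \<alpha> < 0}"

definition simple_roots :: "'a::euclidean_space set \<Rightarrow> 'a set \<Rightarrow> 'a set" where
  "simple_roots R C = {\<alpha>\<in>pos_roots R C.
      \<not> (\<exists>\<beta>\<in>pos_roots R C. \<exists>\<gamma>\<in>pos_roots R C. \<alpha> = \<beta> + \<gamma>)}"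

definition admissible :: "'a::euclidean_space set \<Rightarrow> 'a set \<Rightarrow> 'a set \<Rightarrow> bool" where
  "admissible R Q C \<longleftrightarrow> weyl_chamber R C \<and> pos_roots R C \<subseteq> Q"

definition root_involution :: "'a::euclidean_space set \<Rightarrow> ('a \<Rightarrow> 'a) \<Rightarrow> bool" where
  "root_involution R s \<longleftrightarrow> linear s \<and> (\<forall>x. s (s x) = x) \<and>
     (\<forall>x. norm (s x) = norm x) \<and> s ` R = R"

definition complex_root :: "('a::euclidean_space \<Rightarrow> 'a) \<Rightarrow> 'a \<Rightarrow> bool" where
  "complex_root s \<alpha> \<longleftrightarrow> s \<alpha> \<noteq> \<alpha> \<and> s \<alpha> \<noteq> - \<alpha>"

definition Phi :: "'a::euclidean_space set \<Rightarrow> 'a set \<Rightarrow> 'a set \<Rightarrow> 'a set" where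
  "Phi R Q C = simple_roots R C \<inter> nilpart Q"

definition V_fit :: "'a::euclidean_space set \<Rightarrow> 'a set \<Rightarrow> ('a \<Rightarrow> 'a) \<Rightarrow> 'a set \<Rightarrow> bool" where
  "V_fit R Q s C \<longleftrightarrow> admissible R Q C \<and>
     (\<forall>\<alpha>\<in>simple_roots R C - Phi R Q C. complex_root s \<alpha> \<longrightarrow> s \<alpha> \<in> neg_roots R C)"

end

theory Submission
  imports Defs
begin

text \<open>
  Let h be the linear functional that is 1 on the simple roots in \<open>\<Phi>\<^sub>C\<close> and 0 on the other
  simple roots. Since Q is closed and contains the positive roots, induction over sums of
  positive roots gives \<open>Q = {h \<ge> 0}\<close> and \<open>Q\<^sup>n = {h > 0}\<close>. V-fitness makes \<open>h \<circ> s\<close>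
  nonpositive on the simple roots outside \<open>\<Phi>\<^sub>C\<close>; hence \<open>h \<circ> s \<le> 0\<close> on all positive roots
  of height \<open>h = 0\<close>, and on all positive roots if \<open>s(\<Phi>\<^sub>C)\<close> is negative. So a root
  \<open>\<alpha> \<in> Q\<^sup>n\<close> with \<open>s \<alpha>\<close> positive would give \<open>0 < h \<alpha> = h (s (s \<alpha>)) \<le> 0\<close>: under (3)
  directly, and under (1) because there \<open>-s \<alpha> \<in> Q\<close> forces \<open>h (s \<alpha>) = 0\<close>. Conversely, under
  (2) every root \<open>\<alpha> \<notin> Q\<close> has \<open>-\<alpha> \<in> Q\<^sup>n\<close>, so \<open>s \<alpha>\<close> is positive, lies in Q, and \<open>\<alpha> \<in> s(Q)\<close>.
\<close>

lemma root_system_finite: "reduced_root_system R \<Longrightarrow> finite R"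
  by (simp add: reduced_root_system_def)

lemma root_system_uminus_mem:
  assumes "reduced_root_system R" "\<alpha> \<in> R"
  shows "- \<alpha> \<in> R"
proof -
  have "\<alpha> \<bullet> \<alpha> \<noteq> 0"
    using assms unfolding reduced_root_system_def by auto
  moreover have "\<alpha> - (2 * (\<alpha> \<bullet> \<alpha>) / (\<alpha> \<bullet> \<alpha>)) *\<^sub>R \<alpha> \<in> R"
    using assms unfolding reduced_root_system_def by blast
  ultimately show ?thesis
    by (simp add: scaleR_2 algebra_simps)
qed

lemma root_system_uminus_mem_iff:
  "reduced_root_system R \<Longrightarrow> - \<alpha> \<in> R \<longleftrightarrow> \<alpha> \<in> R"
  using root_system_uminus_mem[of R "- \<alpha>"] root_system_uminus_mem[of R \<alpha>] by auto

lemma root_system_diff_mem: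
  assumes rr: "reduced_root_system R" and "\<alpha> \<in> R" "\<beta> \<in> R" "\<alpha> \<noteq> \<beta>"
    and acute: "\<alpha> \<bullet> \<beta> > 0"
  shows "\<alpha> - \<beta> \<in> R \<or> \<beta> - \<alpha> \<in> R"
proof -
  have \<alpha>\<alpha>: "\<alpha> \<bullet> \<alpha> > 0" and \<beta>\<beta>: "\<beta> \<bullet> \<beta> > 0"
    using rr \<open>\<alpha> \<in> R\<close> \<open>\<beta> \<in> R\<close> unfolding reduced_root_system_def by (metis inner_gt_zero_iff)+
  define p where "p = 2 * (\<beta> \<bullet> \<alpha>) / (\<alpha> \<bullet> \<alpha>)"
  define q where "q = 2 * (\<alpha> \<bullet> \<beta>) / (\<beta> \<bullet> \<beta>)"
  have "p \<in> \<int>" "q \<in> \<int>" and p_refl: "\<beta> - p *\<^sub>R \<alpha> \<in> R" and q_refl: "\<alpha> - q *\<^sub>R \<beta> \<in> R"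
    using rr \<open>\<alpha> \<in> R\<close> \<open>\<beta> \<in> R\<close> unfolding reduced_root_system_def p_def q_def by blast+
  then obtain m n :: int where m: "p = m" and n: "q = n"
    by (metis Ints_cases)
  have "p > 0" "q > 0"
    using \<alpha>\<alpha> \<beta>\<beta> acute by (simp_all add: p_def q_def inner_commute)
  then have "m > 0" "n > 0"
    using m n by simp_all
  txt \<open>The Cartan integers p and q are positive with \<open>p q < 4\<close>, so one of them is 1.\<close>
  have not_parallel: "(\<alpha> \<bullet> \<beta>)\<^sup>2 \<noteq> (\<alpha> \<bullet> \<alpha>) * (\<beta> \<bullet> \<beta>)"
  proof
    assume parallel: "(\<alpha> \<bullet> \<beta>)\<^sup>2 = (\<alpha> \<bullet> \<alpha>) * (\<beta> \<bullet> \<beta>)"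
    define t where "t = (\<alpha> \<bullet> \<beta>) / (\<alpha> \<bullet> \<alpha>)"
    have "(\<beta> - t *\<^sub>R \<alpha>) \<bullet> (\<beta> - t *\<^sub>R \<alpha>) = \<beta> \<bullet> \<beta> - 2 * t * (\<alpha> \<bullet> \<beta>) + t\<^sup>2 * (\<alpha> \<bullet> \<alpha>)"
      by (simp add: inner_diff inner_commute algebra_simps power2_eq_square)
    also have "\<dots> = 0"
      using parallel \<alpha>\<alpha> by (simp add: t_def field_simps power2_eq_square)
    finally have "\<beta> = t *\<^sub>R \<alpha>"
      by simp
    moreover from this have "t = 1 \<or> t = -1"
      using rr \<open>\<alpha> \<in> R\<close> \<open>\<beta> \<in> R\<close> unfolding reduced_root_system_def by metis
    ultimately have "\<beta> = - \<alpha>"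
      using \<open>\<alpha> \<noteq> \<beta>\<close> by auto
    then have "\<alpha> \<bullet> \<beta> = - (\<alpha> \<bullet> \<alpha>)"
      by simp
    then show False
      using acute \<alpha>\<alpha> by linarith
  qed
  have "p * q = 4 * (\<alpha> \<bullet> \<beta>)\<^sup>2 / ((\<alpha> \<bullet> \<alpha>) * (\<beta> \<bullet> \<beta>))"
    by (simp add: p_def q_def inner_commute field_simps power2_eq_square)
  also have "\<dots> < 4"
    using Cauchy_Schwarz_ineq[of \<alpha> \<beta>] not_parallel \<alpha>\<alpha> \<beta>\<beta> by (simp add: field_simps)
  finally have "m * n < 4"
    using m n by (metis of_int_less_iff of_int_mult of_int_numeral)
  have "m = 1 \<or> n = 1"
  proof (rule ccontr)
    assume "\<not> (m = 1 \<or> n = 1)"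
    then have "2 * 2 \<le> m * n"
      using \<open>m > 0\<close> \<open>n > 0\<close> by (intro mult_mono) auto
    then show False
      using \<open>m * n < 4\<close> by simp
  qed
  then show ?thesis
    using p_refl q_refl m n by auto
qed

lemma weyl_chamberD:
  assumes "weyl_chamber R C"
  shows "C \<noteq> {}" "C \<subseteq> regular_set R" "connected C"
proof -
  obtain x where "x \<in> regular_set R" and C: "C = connected_component_set (regular_set R) x"
    using assms unfolding weyl_chamber_def by blast
  then have "x \<in> C"
    using connected_component_refl_eq[of "regular_set R" x] by simp
  then show "C \<noteq> {}"
    by blast
  show "C \<subseteq> regular_set R" "connected C"
    using C by (auto simp: connected_component_subset connected_connected_component)
qed

lemma root_pos_or_neg:
  assumes "weyl_chamber R C" "\<alpha> \<in> R"
  shows "\<alpha> \<in> pos_roots R C \<or> \<alpha> \<in> neg_roots R C"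
proof (rule ccontr)
  assume "\<not> ?thesis"
  then obtain y z where "y \<in> C" "\<alpha> \<bullet> y \<le> 0" "z \<in> C" "0 \<le> \<alpha> \<bullet> z"
    using \<open>\<alpha> \<in> R\<close> unfolding pos_roots_def neg_roots_def by (auto simp: inner_commute)
  then obtain w where "w \<in> C" "\<alpha> \<bullet> w = 0"
    using connected_ivt_hyperplane weyl_chamberD(3)[OF assms(1)] by blast
  then show False
    using weyl_chamberD(2)[OF assms(1)] \<open>\<alpha> \<in> R\<close> by (auto simp: regular_set_def inner_commute)
qed

lemma uminus_pos_roots_iff:
  "reduced_root_system R \<Longrightarrow> - \<alpha> \<in> pos_roots R C \<longleftrightarrow> \<alpha> \<in> neg_roots R C"
  by (auto simp: pos_roots_def neg_roots_def root_system_uminus_mem_iff)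

lemma simple_roots_subset_pos_roots: "simple_roots R C \<subseteq> pos_roots R C"
  by (auto simp: simple_roots_def)

lemma finite_pos_roots: "finite R \<Longrightarrow> finite (pos_roots R C)"
  by (simp add: pos_roots_def)

lemma simple_root_not_sum:
  "\<alpha> \<in> simple_roots R C \<Longrightarrow> \<beta> \<in> pos_roots R C \<Longrightarrow> \<gamma> \<in> pos_roots R C \<Longrightarrow> \<alpha> \<noteq> \<beta> + \<gamma>"
  by (auto simp: simple_roots_def)

lemma simple_roots_inner_nonpos:
  assumes rr: "reduced_root_system R" and wc: "weyl_chamber R C"
    and \<alpha>: "\<alpha> \<in> simple_roots R C" and \<beta>: "\<beta> \<in> simple_roots R C" and "\<alpha> \<noteq> \<beta>"
  shows "\<alpha> \<bullet> \<beta> \<le> 0"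
proof (rule ccontr)
  have pos: "\<alpha> \<in> pos_roots R C" "\<beta> \<in> pos_roots R C"
    using \<alpha> \<beta> simple_roots_subset_pos_roots by blast+
  then have "\<alpha> \<in> R" "\<beta> \<in> R"
    by (simp_all add: pos_roots_def)
  assume "\<not> \<alpha> \<bullet> \<beta> \<le> 0"
  then have "\<alpha> - \<beta> \<in> R \<or> - (\<alpha> - \<beta>) \<in> R"
    using root_system_diff_mem[OF rr \<open>\<alpha> \<in> R\<close> \<open>\<beta> \<in> R\<close> \<open>\<alpha> \<noteq> \<beta>\<close>] by simp
  then have "\<alpha> - \<beta> \<in> R"
    using root_system_uminus_mem_iff[OF rr] by blast
  then consider "\<alpha> - \<beta> \<in> pos_roots R C" | "- (\<alpha> - \<beta>) \<in> pos_roots R C"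
    using root_pos_or_neg[OF wc] uminus_pos_roots_iff[OF rr] by blast
  then show False
  proof cases
    case 1
    then show False
      using simple_root_not_sum[OF \<alpha> pos(2) 1] by simp
  next
    case 2
    then show False
      using simple_root_not_sum[OF \<beta> pos(1) 2] by simp
  qed
qed

lemma nonneg_combination_eq_0:
  fixes x :: "'a::real_inner"
  assumes "finite S" and pos: "\<And>v. v \<in> S \<Longrightarrow> 0 < x \<bullet> v" and nonneg: "\<And>v. v \<in> S \<Longrightarrow> 0 \<le> c v"
    and "(\<Sum>v\<in>S. c v *\<^sub>R v) = 0" "v \<in> S"
  shows "c v = 0"
proof -
  have "(\<Sum>u\<in>S. c u * (x \<bullet> u)) = x \<bullet> (\<Sum>u\<in>S. c u *\<^sub>R u)"
    by (simp add: inner_sum_right)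
  also have "\<dots> = 0"
    using assms(4) by simp
  finally have "\<forall>u\<in>S. c u * (x \<bullet> u) = 0"
    using sum_nonneg_eq_0_iff[OF \<open>finite S\<close>, of "\<lambda>u. c u * (x \<bullet> u)"] pos nonneg
    by (simp add: less_imp_le)
  then show ?thesis
    using pos[OF \<open>v \<in> S\<close>] \<open>v \<in> S\<close> by force
qed
lemma independent_simple_roots:
  assumes rr: "reduced_root_system R" and wc: "weyl_chamber R C"
  shows "independent (simple_roots R C)"
  unfolding independent_explicit
proof (intro conjI allI impI ballI)
  let ?B = "simple_roots R C"
  show "finite ?B"
    using finite_pos_roots[OF root_system_finite[OF rr]] simple_roots_subset_pos_roots
    by (rule finite_subset[rotated])
  obtain x where x: "x \<in> C"
    using weyl_chamberD(1)[OF wc] by blast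
  then have x_pos: "0 < x \<bullet> \<beta>" if "\<beta> \<in> ?B" for \<beta>
    using that simple_roots_subset_pos_roots unfolding pos_roots_def by blast
  fix c v
  assume "(\<Sum>v\<in>?B. c v *\<^sub>R v) = 0" and "v \<in> ?B"
  txt \<open>The positive and negative parts of c give the same vector w, and \<open>w \<bullet> w \<le> 0\<close>
    because distinct simple roots are obtuse.\<close>
  define p where "p u = max (c u) 0" for u
  define n where "n u = max (- c u) 0" for u
  define w where "w = (\<Sum>u\<in>?B. p u *\<^sub>R u)"
  have "p u - n u = c u" for u
    by (simp add: p_def n_def max_def)
  then have "(\<Sum>u\<in>?B. (p u - n u) *\<^sub>R u) = 0"
    using \<open>(\<Sum>v\<in>?B. c v *\<^sub>R v) = 0\<close> by simp
  then have w_n: "w = (\<Sum>u\<in>?B. n u *\<^sub>R u)"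
    by (simp add: w_def scaleR_diff_left sum_subtractf)
  have "w \<bullet> w = (\<Sum>u\<in>?B. p u *\<^sub>R u) \<bullet> (\<Sum>u'\<in>?B. n u' *\<^sub>R u')"
    by (simp only: w_def[symmetric] w_n[symmetric])
  also have "\<dots> = (\<Sum>u'\<in>?B. \<Sum>u\<in>?B. p u * n u' * (u \<bullet> u'))"
    by (simp add: inner_sum_left inner_sum_right sum_distrib_left algebra_simps)
  also have "\<dots> \<le> 0"
  proof (intro sum_nonpos)
    fix u' u assume "u' \<in> ?B" "u \<in> ?B"
    show "p u * n u' * (u \<bullet> u') \<le> 0"
    proof (cases "u = u'")
      case True
      then show ?thesis
        by (simp add: p_def n_def max_def)
    next
      case False
      then have "u \<bullet> u' \<le> 0"
        using simple_roots_inner_nonpos[OF rr wc \<open>u \<in> ?B\<close> \<open>u' \<in> ?B\<close>] by blast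
      moreover have "0 \<le> p u * n u'"
        by (simp add: p_def n_def)
      ultimately show ?thesis
        by (simp add: mult_nonneg_nonpos)
    qed
  qed
  finally have "w = 0"
    by (metis inner_gt_zero_iff not_le)
  then have "p v = 0" "n v = 0"
    using nonneg_combination_eq_0[OF \<open>finite ?B\<close> x_pos, of p v]
      nonneg_combination_eq_0[OF \<open>finite ?B\<close> x_pos, of n v] \<open>v \<in> ?B\<close> w_n
    by (simp_all add: w_def p_def n_def)
  then show "c v = 0"
    by (simp add: p_def n_def max_def split: if_splits)
qed

lemma pos_roots_induct[consumes 3, case_names simple add]:
  assumes wc: "weyl_chamber R C" and "finite R" and "\<alpha> \<in> pos_roots R C"
    and simple: "\<And>\<beta>. \<beta> \<in> simple_roots R C \<Longrightarrow> P \<beta>"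
    and add: "\<And>\<beta> \<gamma>. \<beta> \<in> pos_roots R C \<Longrightarrow> \<gamma> \<in> pos_roots R C \<Longrightarrow> \<beta> + \<gamma> \<in> pos_roots R C
                \<Longrightarrow> P \<beta> \<Longrightarrow> P \<gamma> \<Longrightarrow> P (\<beta> + \<gamma>)"
  shows "P \<alpha>"
proof -
  obtain x where x: "x \<in> C"
    using weyl_chamberD(1)[OF wc] by blast
  define below where "below \<alpha> = card {\<delta> \<in> pos_roots R C. x \<bullet> \<delta> < x \<bullet> \<alpha>}" for \<alpha>
  have below_mono: "below \<delta> < below \<alpha>" if "\<delta> \<in> pos_roots R C" "x \<bullet> \<delta> < x \<bullet> \<alpha>" for \<delta> \<alpha>
    unfolding below_def
    by (rule psubset_card_mono) (use finite_pos_roots[OF \<open>finite R\<close>] that in auto)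
  show ?thesis
    using \<open>\<alpha> \<in> pos_roots R C\<close>
  proof (induction \<alpha> rule: measure_induct_rule[of below])
    case (less \<alpha>)
    show ?case
    proof (cases "\<alpha> \<in> simple_roots R C")
      case True
      then show ?thesis
        by (rule simple)
    next
      case False
      then obtain \<beta> \<gamma> where \<beta>: "\<beta> \<in> pos_roots R C" and \<gamma>: "\<gamma> \<in> pos_roots R C" and "\<alpha> = \<beta> + \<gamma>"
        using less.prems unfolding simple_roots_def by blast
      moreover have "x \<bullet> \<beta> > 0" "x \<bullet> \<gamma> > 0"
        using x \<beta> \<gamma> unfolding pos_roots_def by auto
      ultimately have "below \<beta> < below \<alpha>" "below \<gamma> < below \<alpha>"
        using below_mono by (auto simp: inner_add_right)
      then show ?thesis
        using add[OF \<beta> \<gamma>] less \<beta> \<gamma> \<open>\<alpha> = \<beta> + \<gamma>\<close> by blast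
    qed
  qed
qed

lemma pos_roots_linear_nonneg:
  fixes f :: "'a::euclidean_space \<Rightarrow> real"
  assumes wc: "weyl_chamber R C" and "finite R" and "linear f"
    and f_simple: "\<And>\<beta>. \<beta> \<in> simple_roots R C \<Longrightarrow> 0 \<le> f \<beta>"
    and "\<alpha> \<in> pos_roots R C"
  shows "0 \<le> f \<alpha>"
  using wc \<open>finite R\<close> \<open>\<alpha> \<in> pos_roots R C\<close>
proof (induction rule: pos_roots_induct)
  case (simple \<beta>)
  then show ?case
    by (rule f_simple)
next
  case (add \<beta> \<gamma>)
  then show ?case
    using linear_add[OF \<open>linear f\<close>, of \<beta> \<gamma>] by linarith
qed

lemma pos_roots_linear_nonneg_on_kernel:
  fixes f g :: "'a::euclidean_space \<Rightarrow> real"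
  assumes wc: "weyl_chamber R C" and "finite R" and "linear f" and "linear g"
    and f_simple: "\<And>\<beta>. \<beta> \<in> simple_roots R C \<Longrightarrow> 0 \<le> f \<beta>"
    and g_simple: "\<And>\<beta>. \<beta> \<in> simple_roots R C \<Longrightarrow> f \<beta> = 0 \<Longrightarrow> 0 \<le> g \<beta>"
    and "\<alpha> \<in> pos_roots R C" and "f \<alpha> = 0"
  shows "0 \<le> g \<alpha>"
proof -
  have "f \<alpha> = 0 \<longrightarrow> 0 \<le> g \<alpha>"
    using wc \<open>finite R\<close> \<open>\<alpha> \<in> pos_roots R C\<close>
  proof (induction rule: pos_roots_induct)
    case (simple \<beta>)
    then show ?case
      using g_simple by blast
  next
    case (add \<beta> \<gamma>)
    have "0 \<le> f \<beta>" "0 \<le> f \<gamma>"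
      using pos_roots_linear_nonneg[OF wc \<open>finite R\<close> \<open>linear f\<close> f_simple] add.hyps by blast+
    then show ?case
      using add.IH linear_add[OF \<open>linear f\<close>, of \<beta> \<gamma>] linear_add[OF \<open>linear g\<close>, of \<beta> \<gamma>]
      by linarith
  qed
  then show ?thesis
    using \<open>f \<alpha> = 0\<close> by blast
qed

lemma closed_subset_uminus_add_iff:
  assumes rr: "reduced_root_system R" and "closed_subset R Q"
    and "\<beta> \<in> Q" "\<gamma> \<in> Q" "\<beta> + \<gamma> \<in> R"
  shows "- (\<beta> + \<gamma>) \<in> Q \<longleftrightarrow> - \<beta> \<in> Q \<and> - \<gamma> \<in> Q"
proof -
  have QR: "Q \<subseteq> R" and closed: "\<And>\<delta> \<epsilon>. \<delta> \<in> Q \<Longrightarrow> \<epsilon> \<in> Q \<Longrightarrow> \<delta> + \<epsilon> \<in> R \<Longrightarrow> \<delta> + \<epsilon> \<in> Q"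
    using \<open>closed_subset R Q\<close> unfolding closed_subset_def by blast+
  have "- \<beta> \<in> R" "- \<gamma> \<in> R" "- (\<beta> + \<gamma>) \<in> R"
    using assms QR root_system_uminus_mem_iff[OF rr] by blast+
  show ?thesis
  proof
    assume sum: "- (\<beta> + \<gamma>) \<in> Q"
    have "- \<beta> = - (\<beta> + \<gamma>) + \<gamma>" "- \<gamma> = - (\<beta> + \<gamma>) + \<beta>"
      by (simp_all add: algebra_simps)
    then show "- \<beta> \<in> Q \<and> - \<gamma> \<in> Q"
      using closed[OF sum \<open>\<gamma> \<in> Q\<close>] closed[OF sum \<open>\<beta> \<in> Q\<close>] \<open>- \<beta> \<in> R\<close> \<open>- \<gamma> \<in> R\<close>
      by metis
  next
    assume "- \<beta> \<in> Q \<and> - \<gamma> \<in> Q"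
    then show "- (\<beta> + \<gamma>) \<in> Q"
      using closed[of "- \<beta>" "- \<gamma>"] \<open>- (\<beta> + \<gamma>) \<in> R\<close> by (simp add: algebra_simps)
  qed
qed

text \<open>The sum of the coefficients at \<open>\<Phi>\<^sub>C\<close> in the expansion of a root in simple roots;
  it exists because the simple roots are linearly independent.\<close>
definition Phi_height :: "'a::euclidean_space set \<Rightarrow> 'a set \<Rightarrow> 'a set \<Rightarrow> 'a \<Rightarrow> real" where
  "Phi_height R Q C = (SOME h. linear h \<and>
     (\<forall>\<beta>\<in>simple_roots R C. h \<beta> = (if \<beta> \<in> Phi R Q C then 1 else 0)))"

lemma Phi_height_spec:
  assumes "reduced_root_system R" "weyl_chamber R C"
  shows "linear (Phi_height R Q C) \<and>
    (\<forall>\<beta>\<in>simple_roots R C. Phi_height R Q C \<beta> = (if \<beta> \<in> Phi R Q C then 1 else 0))"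
proof -
  have "\<exists>h. linear h \<and> (\<forall>\<beta>\<in>simple_roots R C. h \<beta> = (if \<beta> \<in> Phi R Q C then 1 else 0))"
    by (rule linear_independent_extend[OF independent_simple_roots[OF assms]])
  then show ?thesis
    unfolding Phi_height_def by (rule someI_ex)
qed

lemma linear_Phi_height:
  "reduced_root_system R \<Longrightarrow> weyl_chamber R C \<Longrightarrow> linear (Phi_height R Q C)"
  using Phi_height_spec by blast

lemma Phi_height_simple_root:
  "reduced_root_system R \<Longrightarrow> weyl_chamber R C \<Longrightarrow> \<beta> \<in> simple_roots R C \<Longrightarrow>
    Phi_height R Q C \<beta> = (if \<beta> \<in> Phi R Q C then 1 else 0)"
  using Phi_height_spec by blast

lemma Phi_height_pos_root_nonneg:
  assumes rr: "reduced_root_system R" and wc: "weyl_chamber R C" and "\<alpha> \<in> pos_roots R C"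
  shows "0 \<le> Phi_height R Q C \<alpha>"
  using pos_roots_linear_nonneg[OF wc root_system_finite[OF rr] linear_Phi_height[OF rr wc]]
    Phi_height_simple_root[OF rr wc] assms(3) by simp

lemma Phi_height_neg_root_nonpos:
  assumes rr: "reduced_root_system R" and wc: "weyl_chamber R C" and "\<alpha> \<in> neg_roots R C"
  shows "Phi_height R Q C \<alpha> \<le> 0"
  using Phi_height_pos_root_nonneg[OF rr wc, of "- \<alpha>" Q] assms(3)
  by (simp add: uminus_pos_roots_iff[OF rr] linear_neg[OF linear_Phi_height[OF rr wc]])

lemma closed_subset_eq_Phi_height:
  assumes rr: "reduced_root_system R" and wc: "weyl_chamber R C"
    and closed: "closed_subset R Q" and pos_Q: "pos_roots R C \<subseteq> Q"
  shows "Q = {\<alpha> \<in> R. 0 \<le> Phi_height R Q C \<alpha>}"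
proof -
  let ?h = "Phi_height R Q C"
  have h_lin: "linear ?h"
    using linear_Phi_height[OF rr wc] .
  then have h_neg: "?h (- \<alpha>) = - ?h \<alpha>" for \<alpha>
    by (rule linear_neg)
  have uminus_mem_iff: "- \<alpha> \<in> Q \<longleftrightarrow> ?h \<alpha> = 0" if "\<alpha> \<in> pos_roots R C" for \<alpha>
    using wc root_system_finite[OF rr] that
  proof (induction rule: pos_roots_induct)
    case (simple \<beta>)
    then show ?case
      using pos_Q simple_roots_subset_pos_roots Phi_height_simple_root[OF rr wc simple]
      by (auto simp: Phi_def nilpart_def)
  next
    case (add \<beta> \<gamma>)
    have "0 \<le> ?h \<beta>" "0 \<le> ?h \<gamma>"
      using Phi_height_pos_root_nonneg[OF rr wc] add.hyps by blast+
    moreover have "- (\<beta> + \<gamma>) \<in> Q \<longleftrightarrow> - \<beta> \<in> Q \<and> - \<gamma> \<in> Q"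
      using closed_subset_uminus_add_iff[OF rr closed] add.hyps pos_Q by (auto simp: pos_roots_def)
    ultimately show ?case
      using add.IH linear_add[OF h_lin, of \<beta> \<gamma>] by linarith
  qed
  have "\<alpha> \<in> Q \<longleftrightarrow> 0 \<le> ?h \<alpha>" if "\<alpha> \<in> R" for \<alpha>
    using root_pos_or_neg[OF wc that]
  proof
    assume "\<alpha> \<in> pos_roots R C"
    then show ?thesis
      using pos_Q Phi_height_pos_root_nonneg[OF rr wc] by blast
  next
    assume "\<alpha> \<in> neg_roots R C"
    then show ?thesis
      using uminus_mem_iff[of "- \<alpha>"] Phi_height_neg_root_nonpos[OF rr wc, of \<alpha> Q]
      by (auto simp: uminus_pos_roots_iff[OF rr] h_neg)
  qed
  moreover have "Q \<subseteq> R"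
    using closed by (simp add: closed_subset_def)
  ultimately show ?thesis
    by blast
qed

lemma nilpart_eq_Phi_height:
  assumes rr: "reduced_root_system R" and wc: "weyl_chamber R C"
    and "closed_subset R Q" "pos_roots R C \<subseteq> Q"
  shows "nilpart Q = {\<alpha> \<in> R. 0 < Phi_height R Q C \<alpha>}"
proof -
  have Q_iff: "\<beta> \<in> Q \<longleftrightarrow> \<beta> \<in> R \<and> 0 \<le> Phi_height R Q C \<beta>" for \<beta>
    using closed_subset_eq_Phi_height[OF assms] by blast
  show ?thesis
    unfolding nilpart_def Q_iff
    by (auto simp: root_system_uminus_mem_iff[OF rr] linear_neg[OF linear_Phi_height[OF rr wc]])
qed

lemma root_involutionD:
  assumes "root_involution R s"
  shows "linear s" "s (s x) = x" "\<alpha> \<in> R \<Longrightarrow> s \<alpha> \<in> R"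
  using assms unfolding root_involution_def by auto

lemma V_fitD:
  assumes "V_fit R Q s C"
  shows "weyl_chamber R C" "pos_roots R C \<subseteq> Q"
  using assms by (simp_all add: V_fit_def admissible_def)

lemma V_fit_Phi_height_simple_root_nonpos:
  assumes rr: "reduced_root_system R" and fit: "V_fit R Q s C"
    and \<beta>: "\<beta> \<in> simple_roots R C" "\<beta> \<notin> Phi R Q C"
  shows "Phi_height R Q C (s \<beta>) \<le> 0"
proof -
  have wc: "weyl_chamber R C"
    using V_fitD(1)[OF fit] .
  have h\<beta>: "Phi_height R Q C \<beta> = 0"
    using Phi_height_simple_root[OF rr wc \<beta>(1)] \<beta>(2) by simp
  show ?thesis
  proof (cases "complex_root s \<beta>")
    case True
    then have "s \<beta> \<in> neg_roots R C"
      using fit \<beta> unfolding V_fit_def by blast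
    then show ?thesis
      by (rule Phi_height_neg_root_nonpos[OF rr wc])
  next
    case False
    then have "s \<beta> = \<beta> \<or> s \<beta> = - \<beta>"
      by (simp add: complex_root_def)
    then show ?thesis
      using h\<beta> linear_neg[OF linear_Phi_height[OF rr wc, of Q], of \<beta>] by auto
  qed
qed

lemma V_fit_Phi_height_involution_nonpos:
  assumes rr: "reduced_root_system R" and inv: "root_involution R s" and fit: "V_fit R Q s C"
    and "\<alpha> \<in> pos_roots R C" "Phi_height R Q C \<alpha> = 0"
  shows "Phi_height R Q C (s \<alpha>) \<le> 0"
proof -
  let ?h = "Phi_height R Q C"
  have wc: "weyl_chamber R C"
    using V_fitD(1)[OF fit] .
  have h_lin: "linear ?h"
    by (rule linear_Phi_height[OF rr wc])
  have "0 \<le> - ?h (s \<alpha>)"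
  proof (rule pos_roots_linear_nonneg_on_kernel[OF wc root_system_finite[OF rr] h_lin _ _ _ assms(4,5)])
    show "linear (\<lambda>x. - ?h (s x))"
      using linear_compose[OF root_involutionD(1)[OF inv] h_lin] by (intro linear_compose_neg) (simp add: o_def)
    show "0 \<le> ?h \<beta>" if "\<beta> \<in> simple_roots R C" for \<beta>
      using Phi_height_simple_root[OF rr wc that] by simp
    show "0 \<le> - ?h (s \<beta>)" if "\<beta> \<in> simple_roots R C" "?h \<beta> = 0" for \<beta>
      using that V_fit_Phi_height_simple_root_nonpos[OF rr fit that(1)]
        Phi_height_simple_root[OF rr wc that(1)] by (auto split: if_splits)
  qed
  then show ?thesis
    by simp
qed

lemma V_fit_Phi_neg_Phi_height_involution_nonpos:
  assumes rr: "reduced_root_system R" and inv: "root_involution R s" and fit: "V_fit R Q s C"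
    and Phi_neg: "s ` Phi R Q C \<subseteq> neg_roots R C" and "\<alpha> \<in> pos_roots R C"
  shows "Phi_height R Q C (s \<alpha>) \<le> 0"
proof -
  let ?h = "Phi_height R Q C"
  have wc: "weyl_chamber R C"
    using V_fitD(1)[OF fit] .
  have h_lin: "linear ?h"
    by (rule linear_Phi_height[OF rr wc])
  have "0 \<le> - ?h (s \<alpha>)"
  proof (rule pos_roots_linear_nonneg[OF wc root_system_finite[OF rr] _ _ assms(5)])
    show "linear (\<lambda>x. - ?h (s x))"
      using linear_compose[OF root_involutionD(1)[OF inv] h_lin] by (intro linear_compose_neg) (simp add: o_def)
    show "0 \<le> - ?h (s \<beta>)" if "\<beta> \<in> simple_roots R C" for \<beta>
    proof (cases "\<beta> \<in> Phi R Q C")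
      case True
      then show ?thesis
        using Phi_neg Phi_height_neg_root_nonpos[OF rr wc, of "s \<beta>" Q] by auto
    next
      case False
      then show ?thesis
        using V_fit_Phi_height_simple_root_nonpos[OF rr fit that] by simp
    qed
  qed
  then show ?thesis
    by simp
qed

lemma totally_complex_imp_nilpart_neg:
  assumes rr: "reduced_root_system R" and closed: "closed_subset R Q"
    and inv: "root_involution R s" and fit: "V_fit R Q s C"
    and total: "Q \<union> s ` Q = R"
  shows "s ` nilpart Q \<subseteq> neg_roots R C"
proof safe
  let ?h = "Phi_height R Q C"
  have wc: "weyl_chamber R C" and pos_Q: "pos_roots R C \<subseteq> Q"
    using V_fitD[OF fit] by blast+
  fix \<alpha> assume \<alpha>: "\<alpha> \<in> nilpart Q"
  then have "\<alpha> \<in> R" "0 < ?h \<alpha>"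
    using nilpart_eq_Phi_height[OF rr wc closed pos_Q] by auto
  have "- \<alpha> \<in> s ` Q"
    using \<alpha> total root_system_uminus_mem[OF rr \<open>\<alpha> \<in> R\<close>] by (auto simp: nilpart_def)
  then have "s (- \<alpha>) \<in> Q"
    using root_involutionD(2)[OF inv] by force
  then have "- s \<alpha> \<in> Q"
    using linear_neg[OF root_involutionD(1)[OF inv]] by simp
  then have "0 \<le> ?h (- s \<alpha>)"
    using closed_subset_eq_Phi_height[OF rr wc closed pos_Q] by blast
  then have "?h (s \<alpha>) \<le> 0"
    using linear_neg[OF linear_Phi_height[OF rr wc, of Q]] by simp
  show "s \<alpha> \<in> neg_roots R C"
  proof (rule ccontr)
    assume "s \<alpha> \<notin> neg_roots R C"
    then have "s \<alpha> \<in> pos_roots R C"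
      using root_pos_or_neg[OF wc root_involutionD(3)[OF inv \<open>\<alpha> \<in> R\<close>]] by blast
    then have "?h (s \<alpha>) = 0"
      using Phi_height_pos_root_nonneg[OF rr wc] \<open>?h (s \<alpha>) \<le> 0\<close> by (meson order_antisym)
    then have "?h (s (s \<alpha>)) \<le> 0"
      using V_fit_Phi_height_involution_nonpos[OF rr inv fit \<open>s \<alpha> \<in> pos_roots R C\<close>] by blast
    then show False
      using \<open>0 < ?h \<alpha>\<close> root_involutionD(2)[OF inv] by simp
  qed
qed

lemma nilpart_neg_imp_totally_complex:
  assumes rr: "reduced_root_system R" and par: "parabolic_subset R Q"
    and inv: "root_involution R s" and pos_Q: "pos_roots R C \<subseteq> Q"
    and nil_neg: "s ` nilpart Q \<subseteq> neg_roots R C"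
  shows "Q \<union> s ` Q = R"
proof
  have "Q \<subseteq> R"
    using par by (simp add: parabolic_subset_def closed_subset_def)
  then show "Q \<union> s ` Q \<subseteq> R"
    using root_involutionD(3)[OF inv] by blast
  show "R \<subseteq> Q \<union> s ` Q"
  proof
    fix \<alpha> assume "\<alpha> \<in> R"
    show "\<alpha> \<in> Q \<union> s ` Q"
    proof (cases "\<alpha> \<in> Q")
      case False
      then have "- \<alpha> \<in> nilpart Q"
        using par \<open>\<alpha> \<in> R\<close> by (force simp: parabolic_subset_def nilpart_def)
      then have "- s (- \<alpha>) \<in> pos_roots R C"
        using nil_neg uminus_pos_roots_iff[OF rr] by blast
      then have "s \<alpha> \<in> Q"
        using pos_Q linear_neg[OF root_involutionD(1)[OF inv]] by auto
      then show ?thesis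
        using image_eqI[of \<alpha> s "s \<alpha>"] root_involutionD(2)[OF inv] by auto
    qed simp
  qed
qed

lemma Phi_neg_imp_nilpart_neg:
  assumes rr: "reduced_root_system R" and closed: "closed_subset R Q"
    and inv: "root_involution R s" and fit: "V_fit R Q s C"
    and Phi_neg: "s ` Phi R Q C \<subseteq> neg_roots R C"
  shows "s ` nilpart Q \<subseteq> neg_roots R C"
proof safe
  let ?h = "Phi_height R Q C"
  have wc: "weyl_chamber R C" and pos_Q: "pos_roots R C \<subseteq> Q"
    using V_fitD[OF fit] by blast+
  fix \<alpha> assume \<alpha>: "\<alpha> \<in> nilpart Q"
  then have "\<alpha> \<in> R" "0 < ?h \<alpha>"
    using nilpart_eq_Phi_height[OF rr wc closed pos_Q] by auto
  show "s \<alpha> \<in> neg_roots R C"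
  proof (rule ccontr)
    assume "s \<alpha> \<notin> neg_roots R C"
    then have "s \<alpha> \<in> pos_roots R C"
      using root_pos_or_neg[OF wc root_involutionD(3)[OF inv \<open>\<alpha> \<in> R\<close>]] by blast
    then have "?h (s (s \<alpha>)) \<le> 0"
      by (rule V_fit_Phi_neg_Phi_height_involution_nonpos[OF rr inv fit Phi_neg])
    then show False
      using \<open>0 < ?h \<alpha>\<close> root_involutionD(2)[OF inv] by simp
  qed
qed

theorem mainTheorem10:
  fixes R Q C :: "'a::euclidean_space set" and s :: "'a \<Rightarrow> 'a"
  assumes "reduced_root_system R"
    and "parabolic_subset R Q"
    and "root_involution R s"
    and "V_fit R Q s C"
  shows "(Q \<union> s ` Q = R \<longleftrightarrow> s ` nilpart Q \<subseteq> neg_roots R C)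
       \<and> (s ` nilpart Q \<subseteq> neg_roots R C \<longleftrightarrow> s ` Phi R Q C \<subseteq> neg_roots R C)"
proof -
  have closed: "closed_subset R Q"
    using assms(2) by (simp add: parabolic_subset_def)
  have pos_Q: "pos_roots R C \<subseteq> Q"
    using V_fitD(2)[OF assms(4)] .
  have "s ` nilpart Q \<subseteq> neg_roots R C \<Longrightarrow> s ` Phi R Q C \<subseteq> neg_roots R C"
    by (auto simp: Phi_def)
  then show ?thesis
    using totally_complex_imp_nilpart_neg[OF assms(1) closed assms(3,4)]
      nilpart_neg_imp_totally_complex[OF assms(1-3) pos_Q]
      Phi_neg_imp_nilpart_neg[OF assms(1) closed assms(3,4)]
    by blast
qed

end
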